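(* Let $T_1,\dots,T_m:[0,1]\to[0,1]$ be $C^1$ maps with $T_i'(x)>0$ for all $x$, such that $T_i((0,1))\cap T_j((0,1))=\emptyset$ for $i\ne j$, and such that $D_n(\omega)\to0$ as $n\to\infty$ uniformly in $\omega\in\Sigma$. Then \[ \lim_{n\to\infty}\sup_{\omega\in\Sigma}\left|-\frac1n\log D_n(\omega)-A_ng(\omega)\right|=0. \]
   Context: $\Sigma=\{1,\dots,m\}^{\mathbb N}$ with shift $\sigma$; $\Pi(\omega)=\lim_{n\to\infty}T_{\omega_1}\circ\cdots\circ T_{\omega_n}(0)$. $D_n(\omega)=\operatorname{diam}(T_{\omega_1}\circ\cdots\circ T_{\omega_n}([0,1]))$. $g(\omega)=-\log T'_{\omega_1}(\Pi(\sigma\omega))$ and $A_ng(\omega)=\frac1n\sum_{i=0}^{n-1}g(\sigma^i\omega)$. *)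

theory Defs
  imports "HOL-Analysis.Analysis" "HOL-Library.Extended_Real"
begin

text \<open>Symbol space: sequences with values in {1..m}; omega 0 is the first symbol.\<close>
definition Sigma_m :: "nat \<Rightarrow> (nat \<Rightarrow> nat) set" where
  "Sigma_m m = {\<omega>. \<forall>k. \<omega> k \<in> {1..m}}"

definition shift :: "(nat \<Rightarrow> nat) \<Rightarrow> (nat \<Rightarrow> nat)" where
  "shift \<omega> = (\<lambda>k. \<omega> (Suc k))"

fun comp_n :: "(nat \<Rightarrow> real \<Rightarrow> real) \<Rightarrow> (nat \<Rightarrow> nat) \<Rightarrow> nat \<Rightarrow> real \<Rightarrow> real" where
  "comp_n T \<omega> 0 = id"
| "comp_n T \<omega> (Suc n) = comp_n T \<omega> n \<circ> T (\<omega> n)"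

definition Pi_proj :: "(nat \<Rightarrow> real \<Rightarrow> real) \<Rightarrow> (nat \<Rightarrow> nat) \<Rightarrow> real" where
  "Pi_proj T \<omega> = lim (\<lambda>n. comp_n T \<omega> n 0)"

definition D_n :: "(nat \<Rightarrow> real \<Rightarrow> real) \<Rightarrow> nat \<Rightarrow> (nat \<Rightarrow> nat) \<Rightarrow> real" where
  "D_n T n \<omega> = diameter (comp_n T \<omega> n ` {0..1})"

text \<open>g(omega) = - log T'_{omega_1}(Pi(sigma omega)); T' is the derivative family.\<close>
definition g_fun :: "(nat \<Rightarrow> real \<Rightarrow> real) \<Rightarrow> (nat \<Rightarrow> real \<Rightarrow> real) \<Rightarrow> (nat \<Rightarrow> nat) \<Rightarrow> real" where
  "g_fun T T' \<omega> = - ln (T' (\<omega> 0) (Pi_proj T (shift \<omega>)))"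

definition A_n :: "((nat \<Rightarrow> nat) \<Rightarrow> real) \<Rightarrow> nat \<Rightarrow> (nat \<Rightarrow> nat) \<Rightarrow> real" where
  "A_n f n \<omega> = (1 / real n) * (\<Sum>i<n. f ((shift ^^ i) \<omega>))"

end

theory Submission
  imports Defs
begin

text \<open>
  By the mean value theorem, the length of the cylinder interval
  \<open>T\<^sub>\<omega>\<^sub>1 \<circ> \<dots> \<circ> T\<^sub>\<omega>\<^sub>n [0,1]\<close> is \<open>\<Prod>\<^sub>k T'\<^sub>\<omega>\<^sub>k(\<xi>\<^sub>k)\<close>, where \<open>\<xi>\<^sub>k\<close> lies in the cylinder
  interval of \<open>\<sigma>\<^sup>k\<^sup>+\<^sup>1\<omega>\<close> of depth \<open>n-k-1\<close>, which also contains \<open>\<Pi>(\<sigma>\<^sup>k\<^sup>+\<^sup>1\<omega>)\<close>. Hence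
  \<open>-log D\<^sub>n(\<omega>) - n A\<^sub>ng(\<omega>)\<close> is a sum of differences of \<open>log T'\<close> at two points at
  distance at most \<open>D\<^sub>n\<^sub>-\<^sub>k\<^sub>-\<^sub>1\<close>. Uniform continuity of \<open>log T'\<close> and the uniform decay of
  \<open>D\<^sub>n\<close> make all but a bounded number of these differences uniformly small, and the
  remaining ones are bounded because \<open>log T'\<close> is bounded.
\<close>

lemma uniformly_continuous_on_finite_family:
  fixes f :: "'i \<Rightarrow> 'a::metric_space \<Rightarrow> 'b::metric_space"
  assumes "finite I" and "\<And>i. i \<in> I \<Longrightarrow> uniformly_continuous_on S (f i)" and "e > 0"
  shows "\<exists>d>0. \<forall>i\<in>I. \<forall>x\<in>S. \<forall>y\<in>S. dist x y < d \<longrightarrow> dist (f i x) (f i y) < e"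
proof -
  have "\<exists>d>0. \<forall>x\<in>S. \<forall>y\<in>S. dist x y < d \<longrightarrow> dist (f i x) (f i y) < e" if "i \<in> I" for i
    using assms(2)[OF that] \<open>e > 0\<close> unfolding uniformly_continuous_on_def
    by (metis dist_commute)
  then obtain d where d: "\<And>i. i \<in> I \<Longrightarrow> d i > 0 \<and>
      (\<forall>x\<in>S. \<forall>y\<in>S. dist x y < d i \<longrightarrow> dist (f i x) (f i y) < e)"
    by metis
  define \<delta> where "\<delta> = Min (insert 1 (d ` I))"
  have "\<delta> > 0" "\<And>i. i \<in> I \<Longrightarrow> \<delta> \<le> d i"
    using d \<open>finite I\<close> by (auto simp: \<delta>_def Min_gr_iff)
  with d show ?thesis by (meson less_le_trans)
qed

lemma abs_sum_le_split:
  fixes h :: "nat \<Rightarrow> real" and n N :: nat and e C :: real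
  assumes small: "\<And>k. k < n \<Longrightarrow> k + N < n \<Longrightarrow> \<bar>h k\<bar> \<le> e"
    and bounded: "\<And>k. k < n \<Longrightarrow> \<bar>h k\<bar> \<le> C" and "e \<ge> 0" "C \<ge> 0"
  shows "\<bar>\<Sum>k<n. h k\<bar> \<le> real n * e + real N * C"
proof -
  let ?tail = "{k \<in> {..<n}. n \<le> k + N}"
  have "card ?tail \<le> card {n - N..<n}"
    by (rule card_mono) auto
  then have "card ?tail \<le> N" by simp
  have "\<bar>\<Sum>k<n. h k\<bar> \<le> (\<Sum>k<n. e + (if n \<le> k + N then C else 0))"
    by (rule order_trans[OF sum_abs sum_mono]) (use small bounded \<open>e \<ge> 0\<close> in force)
  also have "\<dots> = real n * e + real (card ?tail) * C"
    by (simp add: sum.distrib sum.inter_filter[symmetric])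
  also have "\<dots> \<le> real n * e + real N * C"
    using \<open>card ?tail \<le> N\<close> \<open>C \<ge> 0\<close> by (simp add: mult_right_mono)
  finally show ?thesis .
qed

lemma tendsto_SUP_ereal_abs_zero:
  fixes f :: "nat \<Rightarrow> 'a \<Rightarrow> real"
  assumes "A \<noteq> {}" and uniform: "\<And>e. e > 0 \<Longrightarrow> \<exists>N. \<forall>n\<ge>N. \<forall>x\<in>A. \<bar>f n x\<bar> \<le> e"
  shows "(\<lambda>n. SUP x\<in>A. ereal \<bar>f n x\<bar>) \<longlonglongrightarrow> 0"
proof (rule order_tendstoI)
  fix a :: ereal assume "a < 0"
  obtain x where "x \<in> A" using \<open>A \<noteq> {}\<close> by blast
  have "0 \<le> (SUP x\<in>A. ereal \<bar>f n x\<bar>)" for n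
    by (rule SUP_upper2[OF \<open>x \<in> A\<close>]) simp
  with \<open>a < 0\<close> show "\<forall>\<^sub>F n in sequentially. a < (SUP x\<in>A. ereal \<bar>f n x\<bar>)"
    by (auto intro: always_eventually less_le_trans)
next
  fix a :: ereal assume "0 < a"
  then obtain e where "0 < ereal e" "ereal e < a" using ereal_dense2 by blast
  then obtain N where "\<forall>n\<ge>N. \<forall>x\<in>A. \<bar>f n x\<bar> \<le> e" using uniform by auto
  then have "(SUP x\<in>A. ereal \<bar>f n x\<bar>) \<le> ereal e" if "n \<ge> N" for n
    using that by (auto intro: SUP_least)
  with \<open>ereal e < a\<close> show "\<forall>\<^sub>F n in sequentially. (SUP x\<in>A. ereal \<bar>f n x\<bar>) < a"
    unfolding eventually_sequentially by (auto intro: le_less_trans)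
qed

lemma funpow_shift_apply: "(shift ^^ i) \<omega> j = \<omega> (i + j)"
  by (induction i arbitrary: j) (auto simp: shift_def)

lemma comp_n_add: "comp_n T \<omega> (k + j) = comp_n T \<omega> k \<circ> comp_n T ((shift ^^ k) \<omega>) j"
  by (induction j) (auto simp: funpow_shift_apply comp_assoc)

lemma comp_n_Suc_left: "comp_n T \<omega> (Suc n) = T (\<omega> 0) \<circ> comp_n T (shift \<omega>) n"
  using comp_n_add[of T \<omega> 1 n] by simp

lemma Sigma_m_funpow_shift: "\<omega> \<in> Sigma_m m \<Longrightarrow> (shift ^^ i) \<omega> \<in> Sigma_m m"
  by (simp add: Sigma_m_def funpow_shift_apply)

locale interval_ifs =
  fixes m :: nat and T T' :: "nat \<Rightarrow> real \<Rightarrow> real"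
  assumes maps: "\<And>i. i \<in> {1..m} \<Longrightarrow> T i ` {0..1} \<subseteq> {0..1}"
    and deriv: "\<And>i x. i \<in> {1..m} \<Longrightarrow> x \<in> {0..1} \<Longrightarrow>
                  (T i has_real_derivative T' i x) (at x within {0..1})"
    and cont_deriv: "\<And>i. i \<in> {1..m} \<Longrightarrow> continuous_on {0..1} (T' i)"
    and pos: "\<And>i x. i \<in> {1..m} \<Longrightarrow> x \<in> {0..1} \<Longrightarrow> T' i x > 0"
    and unif: "\<forall>e>0. \<exists>N. \<forall>n\<ge>N. \<forall>\<omega>\<in>Sigma_m m. \<bar>D_n T n \<omega>\<bar> < e"
begin

lemma symbol_in_range: "\<omega> \<in> Sigma_m m \<Longrightarrow> \<omega> k \<in> {1..m}"
  by (simp add: Sigma_m_def)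

lemma T_mean_value:
  assumes i: "i \<in> {1..m}" and "0 \<le> a" "a < b" "b \<le> 1"
  obtains \<xi> where "a < \<xi>" "\<xi> < b" "T i b - T i a = T' i \<xi> * (b - a)"
proof -
  have "(T i has_derivative (*) (T' i x)) (at x within {a..b})" if "a \<le> x" "x \<le> b" for x
  proof -
    have "(T i has_real_derivative T' i x) (at x within {0..1})"
      using deriv[OF i] assms that by auto
    then have "(T i has_real_derivative T' i x) (at x within {a..b})"
      by (rule DERIV_subset) (use assms in auto)
    then show ?thesis
      by (simp add: has_field_derivative_def)
  qed
  then show ?thesis
    using mvt_simple[OF \<open>a < b\<close>, of "T i" "\<lambda>x. (*) (T' i x)"] that by auto
qed

lemma strict_mono_on_T: "i \<in> {1..m} \<Longrightarrow> strict_mono_on {0..1} (T i)"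
proof (rule strict_mono_onI)
  fix x y :: real assume i: "i \<in> {1..m}" and "x \<in> {0..1}" "y \<in> {0..1}" "x < y"
  then obtain \<xi> where "x < \<xi>" "\<xi> < y" "T i y - T i x = T' i \<xi> * (y - x)"
    using T_mean_value[OF i] by (metis atLeastAtMost_iff)
  moreover have "T' i \<xi> > 0" using pos[OF i] calculation \<open>x \<in> {0..1}\<close> \<open>y \<in> {0..1}\<close> by auto
  moreover have "T' i \<xi> * (y - x) > 0" using calculation \<open>x < y\<close> by simp
  ultimately show "T i x < T i y" by linarith
qed

lemma comp_n_maps:
  assumes "\<omega> \<in> Sigma_m m"
  shows "comp_n T \<omega> n ` {0..1} \<subseteq> {0..1}"
proof (induction n)
  case (Suc n)
  have "comp_n T \<omega> (Suc n) ` {0..1} \<subseteq> comp_n T \<omega> n ` {0..1}"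
    using maps[OF symbol_in_range[OF assms]] by (auto simp: image_comp[symmetric])
  with Suc show ?case by blast
qed simp

lemma continuous_on_comp_n:
  assumes "\<omega> \<in> Sigma_m m"
  shows "continuous_on {0..1} (comp_n T \<omega> n)"
proof (induction n)
  case (Suc n)
  have i: "\<omega> n \<in> {1..m}" by (rule symbol_in_range[OF assms])
  show ?case
    using continuous_on_compose[OF DERIV_continuous_on[OF deriv[OF i]]]
      continuous_on_subset[OF Suc maps[OF i]] by simp
qed (simp add: continuous_on_id)

lemma strict_mono_on_comp_n:
  assumes "\<omega> \<in> Sigma_m m"
  shows "strict_mono_on {0..1} (comp_n T \<omega> n)"
proof (induction n)
  case (Suc n)
  have i: "\<omega> n \<in> {1..m}" by (rule symbol_in_range[OF assms])
  show ?case
    using monotone_on_o[OF Suc strict_mono_on_T[OF i] maps[OF i]] by (simp add: comp_def)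
qed (simp add: strict_mono_on_ident)

lemma comp_n_image:
  assumes "\<omega> \<in> Sigma_m m"
  shows "comp_n T \<omega> n ` {0..1} = {comp_n T \<omega> n 0 .. comp_n T \<omega> n 1}"
proof -
  let ?f = "comp_n T \<omega> n"
  obtain c d where cd: "?f ` {0..1} = {c..d}" "c \<le> d"
    using continuous_image_closed_interval[OF _ continuous_on_comp_n[OF assms]] by fastforce
  have "mono_on {0..1} ?f"
    by (rule strict_mono_on_imp_mono_on[OF strict_mono_on_comp_n[OF assms]])
  then have mono: "?f 0 \<le> ?f x \<and> ?f x \<le> ?f 1" if "x \<in> {0..1}" for x
    using mono_onD[of "{0..1}" ?f 0 x] mono_onD[of "{0..1}" ?f x 1] that by auto
  have "c \<in> ?f ` {0..1}" "d \<in> ?f ` {0..1}"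
    unfolding cd(1) using cd(2) by auto
  moreover have "?f 0 \<in> {c..d}" "?f 1 \<in> {c..d}"
    unfolding cd(1)[symmetric] by auto
  ultimately have "c = ?f 0" "d = ?f 1"
    using mono by fastforce+
  with cd show ?thesis by simp
qed

lemma D_n_eq:
  assumes "\<omega> \<in> Sigma_m m"
  shows "D_n T n \<omega> = comp_n T \<omega> n 1 - comp_n T \<omega> n 0"
proof -
  have "comp_n T \<omega> n 0 < comp_n T \<omega> n 1"
    using strict_mono_onD[OF strict_mono_on_comp_n[OF assms]] by simp
  then show ?thesis by (simp add: D_n_def comp_n_image[OF assms])
qed

lemma D_n_pos: "\<omega> \<in> Sigma_m m \<Longrightarrow> D_n T n \<omega> > 0"
  using strict_mono_onD[OF strict_mono_on_comp_n] by (simp add: D_n_eq)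

lemma dist_le_D_n:
  assumes "\<omega> \<in> Sigma_m m" "x \<in> comp_n T \<omega> n ` {0..1}" "y \<in> comp_n T \<omega> n ` {0..1}"
  shows "dist x y \<le> D_n T n \<omega>"
  unfolding D_n_def by (rule diameter_bounded_bound) (use assms in \<open>auto simp: comp_n_image\<close>)

lemma comp_n_image_antimono:
  assumes "\<omega> \<in> Sigma_m m" "k \<le> n"
  shows "comp_n T \<omega> n ` {0..1} \<subseteq> comp_n T \<omega> k ` {0..1}"
proof -
  have "comp_n T \<omega> n = comp_n T \<omega> k \<circ> comp_n T ((shift ^^ k) \<omega>) (n - k)"
    using comp_n_add[of T \<omega> k "n - k"] \<open>k \<le> n\<close> by simp
  then show ?thesis
    using comp_n_maps[OF Sigma_m_funpow_shift[OF assms(1)]] by (fastforce simp: image_comp[symmetric])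
qed

lemma Pi_proj_mem:
  assumes \<omega>: "\<omega> \<in> Sigma_m m"
  shows "Pi_proj T \<omega> \<in> comp_n T \<omega> k ` {0..1}"
proof -
  let ?x = "\<lambda>n. comp_n T \<omega> n 0"
  have x_mem: "?x n \<in> comp_n T \<omega> k ` {0..1}" if "k \<le> n" for k n
    using comp_n_image_antimono[OF \<omega> that] by auto
  have "Cauchy ?x"
  proof (rule metric_CauchyI)
    fix e :: real assume "0 < e"
    then obtain N where "D_n T N \<omega> < e" using unif \<omega> by (meson abs_less_iff order_refl)
    then show "\<exists>M. \<forall>a\<ge>M. \<forall>b\<ge>M. dist (?x a) (?x b) < e"
      using dist_le_D_n[OF \<omega> x_mem x_mem] by (meson le_less_trans)
  qed
  then have "?x \<longlonglongrightarrow> Pi_proj T \<omega>"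
    unfolding Pi_proj_def by (simp add: Cauchy_convergent_iff convergent_LIMSEQ_iff)
  moreover have "closed (comp_n T \<omega> k ` {0..1})" by (simp add: comp_n_image[OF \<omega>])
  ultimately show ?thesis
    using x_mem by (intro Lim_in_closed_set) (auto simp: eventually_sequentially)
qed

lemma cylinder_point_near_Pi_proj:
  assumes \<omega>: "\<omega> \<in> Sigma_m m" and x: "x \<in> comp_n T \<omega> n ` {0..1}"
  shows "x \<in> {0..1} \<and> Pi_proj T \<omega> \<in> {0..1} \<and> dist x (Pi_proj T \<omega>) \<le> D_n T n \<omega>"
  using x comp_n_maps[OF \<omega>, of n] Pi_proj_mem[OF \<omega>, of n] dist_le_D_n[OF \<omega> x] by blast

lemma D_n_Suc_mvt:
  assumes \<omega>: "\<omega> \<in> Sigma_m m"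
  obtains \<xi> where "\<xi> \<in> comp_n T (shift \<omega>) n ` {0..1}"
    and "D_n T (Suc n) \<omega> = T' (\<omega> 0) \<xi> * D_n T n (shift \<omega>)"
proof -
  have s\<omega>: "shift \<omega> \<in> Sigma_m m"
    using Sigma_m_funpow_shift[OF \<omega>, of 1] by simp
  define a where "a = comp_n T (shift \<omega>) n 0"
  define b where "b = comp_n T (shift \<omega>) n 1"
  have "0 \<le> a" "b \<le> 1"
    using comp_n_maps[OF s\<omega>, of n] unfolding a_def b_def by (auto simp: image_subset_iff)
  moreover have "a < b"
    using strict_mono_onD[OF strict_mono_on_comp_n[OF s\<omega>]] by (simp add: a_def b_def)
  ultimately obtain \<xi> where "a < \<xi>" "\<xi> < b" and \<xi>: "T (\<omega> 0) b - T (\<omega> 0) a = T' (\<omega> 0) \<xi> * (b - a)"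
    using T_mean_value[OF symbol_in_range[OF \<omega>]] by blast
  show thesis
  proof
    show "\<xi> \<in> comp_n T (shift \<omega>) n ` {0..1}"
      using \<open>a < \<xi>\<close> \<open>\<xi> < b\<close> by (simp add: comp_n_image[OF s\<omega>] a_def b_def)
    show "D_n T (Suc n) \<omega> = T' (\<omega> 0) \<xi> * D_n T n (shift \<omega>)"
      using \<xi> unfolding D_n_eq[OF \<omega>] D_n_eq[OF s\<omega>] comp_n_Suc_left by (simp add: a_def b_def)
  qed
qed

lemma ln_D_n_eq_sum:
  "\<omega> \<in> Sigma_m m \<Longrightarrow> \<exists>\<xi>. (\<forall>k<n. \<xi> k \<in> comp_n T ((shift ^^ Suc k) \<omega>) (n - Suc k) ` {0..1}) \<and>
     ln (D_n T n \<omega>) = (\<Sum>k<n. ln (T' (\<omega> k) (\<xi> k)))"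
proof (induction n arbitrary: \<omega>)
  case 0
  then show ?case by (simp add: D_n_eq)
next
  case (Suc n)
  have s\<omega>: "shift \<omega> \<in> Sigma_m m"
    using Sigma_m_funpow_shift[OF Suc.prems, of 1] by simp
  obtain \<xi>' where \<xi>': "\<forall>k<n. \<xi>' k \<in> comp_n T ((shift ^^ Suc k) (shift \<omega>)) (n - Suc k) ` {0..1}"
    and ln_D: "ln (D_n T n (shift \<omega>)) = (\<Sum>k<n. ln (T' (shift \<omega> k) (\<xi>' k)))"
    using Suc.IH[OF s\<omega>] by blast
  obtain \<xi>0 where \<xi>0: "\<xi>0 \<in> comp_n T (shift \<omega>) n ` {0..1}"
    and D: "D_n T (Suc n) \<omega> = T' (\<omega> 0) \<xi>0 * D_n T n (shift \<omega>)"
    using D_n_Suc_mvt[OF Suc.prems] .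
  have "\<xi>0 \<in> {0..1}"
    using \<xi>0 comp_n_maps[OF s\<omega>] by blast
  then have "T' (\<omega> 0) \<xi>0 > 0"
    by (rule pos[OF symbol_in_range[OF Suc.prems]])
  then have "ln (D_n T (Suc n) \<omega>) = ln (T' (\<omega> 0) \<xi>0) + ln (D_n T n (shift \<omega>))"
    using D D_n_pos[OF s\<omega>, of n] by (simp add: ln_mult)
  moreover have "(\<Sum>k<Suc n. ln (T' (\<omega> k) (case_nat \<xi>0 \<xi>' k))) =
      ln (T' (\<omega> 0) \<xi>0) + (\<Sum>k<n. ln (T' (shift \<omega> k) (\<xi>' k)))"
    unfolding sum.lessThan_Suc_shift by (simp add: shift_def)
  moreover have "case_nat \<xi>0 \<xi>' k \<in> comp_n T ((shift ^^ Suc k) \<omega>) (Suc n - Suc k) ` {0..1}"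
    if "k < Suc n" for k
  proof (cases k)
    case (Suc j)
    have "(shift ^^ Suc j) (shift \<omega>) = (shift ^^ Suc k) \<omega>"
      unfolding Suc by (simp only: funpow_Suc_right o_apply)
    with \<xi>' that Suc show ?thesis by auto
  qed (use \<xi>0 in simp)
  ultimately show ?case
    using ln_D by (intro exI[of _ "case_nat \<xi>0 \<xi>'"]) simp
qed

lemma continuous_on_ln_deriv: "i \<in> {1..m} \<Longrightarrow> continuous_on {0..1} (\<lambda>x. ln (T' i x))"
  by (rule continuous_on_ln[OF cont_deriv]) (use pos in force)+

lemma ln_deriv_bounded: "bounded (\<Union>i\<in>{1..m}. (\<lambda>x. ln (T' i x)) ` {0..1})"
  by (intro bounded_UN ballI compact_imp_bounded compact_continuous_image continuous_on_ln_deriv)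
     auto

lemma ln_deriv_uniform_modulus:
  assumes "e > 0"
  shows "\<exists>d>0. \<forall>i\<in>{1..m}. \<forall>x\<in>{0..1}. \<forall>y\<in>{0..1}. dist x y < d \<longrightarrow>
           dist (ln (T' i x)) (ln (T' i y)) < e"
  using uniformly_continuous_on_finite_family[of "{1..m}" "{0..1}" "\<lambda>i x. ln (T' i x)"]
    compact_uniformly_continuous[OF continuous_on_ln_deriv] assms by auto

text \<open>Stated multiplied by \<open>n\<close>, so that \<open>n = 0\<close> (where \<open>1 / real n = 0\<close>) needs no exception.\<close>

lemma Birkhoff_deviation_bound:
  assumes \<omega>: "\<omega> \<in> Sigma_m m" and "e \<ge> 0"
    and \<eta>: "\<forall>i\<in>{1..m}. \<forall>x\<in>{0..1}. \<forall>y\<in>{0..1}. dist x y < \<eta> \<longrightarrow>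
      dist (ln (T' i x)) (ln (T' i y)) < e"
    and N0: "\<forall>n\<ge>N0. \<forall>\<omega>\<in>Sigma_m m. \<bar>D_n T n \<omega>\<bar> < \<eta>"
    and B: "\<And>i x. i \<in> {1..m} \<Longrightarrow> x \<in> {0..1} \<Longrightarrow> \<bar>ln (T' i x)\<bar> \<le> B"
  shows "real n * \<bar>- (1 / real n) * ln (D_n T n \<omega>) - A_n (g_fun T T') n \<omega>\<bar>
           \<le> real n * e + real N0 * (2 * B)"
proof -
  obtain \<xi> where \<xi>: "\<forall>k<n. \<xi> k \<in> comp_n T ((shift ^^ Suc k) \<omega>) (n - Suc k) ` {0..1}"
    and ln_D: "ln (D_n T n \<omega>) = (\<Sum>k<n. ln (T' (\<omega> k) (\<xi> k)))"
    using ln_D_n_eq_sum[OF \<omega>] by blast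
  define P where "P k = Pi_proj T ((shift ^^ Suc k) \<omega>)" for k
  define h where "h k = ln (T' (\<omega> k) (\<xi> k)) - ln (T' (\<omega> k) (P k))" for k
  have "g_fun T T' ((shift ^^ k) \<omega>) = - ln (T' (\<omega> k) (P k))" for k
    unfolding g_fun_def P_def using funpow_shift_apply[of k \<omega> 0] by simp
  then have deviation: "real n * \<bar>- (1 / real n) * ln (D_n T n \<omega>) - A_n (g_fun T T') n \<omega>\<bar>
      = \<bar>\<Sum>k<n. h k\<bar>"
    unfolding A_n_def ln_D h_def
    by (cases "n = 0") (simp_all add: sum_subtractf sum_negf abs_mult abs_minus_commute field_simps)
  have cylinder_close: "\<xi> k \<in> {0..1} \<and> P k \<in> {0..1} \<and>
      dist (\<xi> k) (P k) \<le> D_n T (n - Suc k) ((shift ^^ Suc k) \<omega>)" if "k < n" for k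
    using cylinder_point_near_Pi_proj[OF Sigma_m_funpow_shift[OF \<omega>]] \<xi> that unfolding P_def by blast
  have "\<bar>h k\<bar> < e" if "k < n" "k + N0 < n" for k
  proof -
    have "N0 \<le> n - Suc k" using that by linarith
    then have "\<bar>D_n T (n - Suc k) ((shift ^^ Suc k) \<omega>)\<bar> < \<eta>"
      using N0 Sigma_m_funpow_shift[OF \<omega>] by blast
    then have "dist (\<xi> k) (P k) < \<eta>"
      using cylinder_close[OF that(1)] by linarith
    then show ?thesis
      using \<eta> cylinder_close[OF that(1)] symbol_in_range[OF \<omega>] unfolding h_def dist_real_def by blast
  qed
  moreover have "\<bar>h k\<bar> \<le> 2 * B" if "k < n" for k
  proof -
    have "\<bar>ln (T' (\<omega> k) (\<xi> k))\<bar> \<le> B" "\<bar>ln (T' (\<omega> k) (P k))\<bar> \<le> B"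
      using B symbol_in_range[OF \<omega>] cylinder_close[OF that] by auto
    then show ?thesis unfolding h_def by linarith
  qed
  moreover have "B \<ge> 0"
    using B[of "\<omega> 0" 0] symbol_in_range[OF \<omega>] by force
  ultimately show ?thesis
    unfolding deviation using \<open>e \<ge> 0\<close> by (intro abs_sum_le_split) (auto intro: less_imp_le)
qed

lemma uniform_estimate:
  assumes "e > 0"
  shows "\<exists>N. \<forall>n\<ge>N. \<forall>\<omega>\<in>Sigma_m m.
           \<bar>- (1 / real n) * ln (D_n T n \<omega>) - A_n (g_fun T T') n \<omega>\<bar> \<le> e"
proof -
  obtain \<eta> where "\<eta> > 0" and \<eta>: "\<forall>i\<in>{1..m}. \<forall>x\<in>{0..1}. \<forall>y\<in>{0..1}. dist x y < \<eta> \<longrightarrow>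
      dist (ln (T' i x)) (ln (T' i y)) < e / 2"
    using ln_deriv_uniform_modulus[of "e / 2"] \<open>e > 0\<close> by auto
  obtain N0 where N0: "\<forall>n\<ge>N0. \<forall>\<omega>\<in>Sigma_m m. \<bar>D_n T n \<omega>\<bar> < \<eta>"
    using unif \<open>\<eta> > 0\<close> by blast
  obtain B where "B > 0" and B: "\<And>i x. i \<in> {1..m} \<Longrightarrow> x \<in> {0..1} \<Longrightarrow> \<bar>ln (T' i x)\<bar> \<le> B"
    using ln_deriv_bounded by (fastforce simp: bounded_pos)
  have "\<bar>- (1 / real n) * ln (D_n T n \<omega>) - A_n (g_fun T T') n \<omega>\<bar> \<le> e"
    if n: "n \<ge> Suc (nat \<lceil>4 * B * N0 / e\<rceil>)" and \<omega>: "\<omega> \<in> Sigma_m m" for n \<omega>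
  proof -
    have "4 * B * N0 / e \<le> real n"
      using n real_nat_ceiling_ge[of "4 * B * N0 / e"] by linarith
    have "real n * \<bar>- (1 / real n) * ln (D_n T n \<omega>) - A_n (g_fun T T') n \<omega>\<bar>
        \<le> real n * (e / 2) + real N0 * (2 * B)"
      using \<open>e > 0\<close> by (intro Birkhoff_deviation_bound[OF \<omega> _ \<eta> N0 B]) auto
    also have "\<dots> \<le> real n * e"
      using \<open>4 * B * N0 / e \<le> real n\<close> \<open>e > 0\<close> by (simp add: field_simps)
    finally show ?thesis
      using n by simp
  qed
  then show ?thesis by blast
qed

end

theorem lemma1:
  fixes m :: nat and T T' :: "nat \<Rightarrow> real \<Rightarrow> real"
  assumes m_pos: "m \<ge> 1"
    and maps: "\<And>i. i \<in> {1..m} \<Longrightarrow> T i ` {0..1} \<subseteq> {0..1}"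
    and deriv: "\<And>i x. i \<in> {1..m} \<Longrightarrow> x \<in> {0..1} \<Longrightarrow>
                  (T i has_real_derivative T' i x) (at x within {0..1})"
    and cont_deriv: "\<And>i. i \<in> {1..m} \<Longrightarrow> continuous_on {0..1} (T' i)"
    and pos: "\<And>i x. i \<in> {1..m} \<Longrightarrow> x \<in> {0..1} \<Longrightarrow> T' i x > 0"
    and disj: "\<And>i j. i \<in> {1..m} \<Longrightarrow> j \<in> {1..m} \<Longrightarrow> i \<noteq> j \<Longrightarrow>
                  T i ` {0<..<1} \<inter> T j ` {0<..<1} = {}"
    and unif: "\<forall>e>0. \<exists>N. \<forall>n\<ge>N. \<forall>\<omega>\<in>Sigma_m m. \<bar>D_n T n \<omega>\<bar> < e"
  shows "(\<lambda>n. SUP \<omega>\<in>Sigma_m m.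
            ereal \<bar>- (1 / real n) * ln (D_n T n \<omega>) - A_n (g_fun T T') n \<omega>\<bar>)
         \<longlonglongrightarrow> 0"
proof -
  interpret interval_ifs m T T'
    using maps deriv cont_deriv pos unif by unfold_locales
  have "(\<lambda>_. 1) \<in> Sigma_m m"
    using m_pos by (simp add: Sigma_m_def)
  then show ?thesis
    by (intro tendsto_SUP_ereal_abs_zero uniform_estimate) auto
qed

end
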